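(* Consider a classical elementary system with timelike four-momentum in explicit form (i) or (ii). Let $\mathbf A\colon\Gamma\to\mathbb R^3$ be $C^1$, invariant under spatial translations ($\{P_a,A_b\}=0$), transforming as a vector under spatial rotations ($\{J_{ab},A_c\}=\delta_{ac}A_b-\delta_{bc}A_a$), and invariant under time reversal ($\mathbf A\circ T_u=\mathbf A$). Then $\mathbf A\cdot\mathbf P=0$ on all of $\Gamma$.
   Context: Fix a positively oriented orthonormal basis $\{e_0=u,\dots,e_3\}$ of Minkowski space (signature $(-,+,+,+)$), speed of light $c>0$, $m>0$. Spatial indices raised/lowered with Kronecker delta; ${}^{(3)}\varepsilon_{abc}$ Levi-Civita symbol; $(\mathbf A\times\mathbf B)_a={}^{(3)}\varepsilon_{abc}A^bB^c$. Poisson bracket: $\omega(X_f,\cdot)=df$, $\{f,g\}=\omega(X_f,X_g)$, so $\{x^a,p_b\}=\delta^a_b$. (i) spin zero ($\mathbf s:=0$): $\Gamma=T^*\mathbb R^3\ni(\mathbf x,\mathbf p)$, $\omega=dx^a\wedge dp_a$; $P_a=p_a$, $P_0=-\sqrt{m^2c^2+\mathbf p^2}$, $J_{ab}=x_ap_b-x_bp_a$, $J_{a0}=P_0x_a$; time reversal $T_u(\mathbf x,\mathbf p)=(\mathbf x,-\mathbf p)$. (ii) spin $S>0$: $\Gamma=T^*\mathbb R^3\times\mathsf S^2\ni(\mathbf x,\mathbf p,\hat{\mathbf s})$, $\omega=dx^a\wedge dp_a+S\,d\Omega^2$; $\mathbf s=S\hat{\mathbf s}$, $\{s_a,s_b\}={}^{(3)}\varepsilon_{abc}s^c$,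 $\mathbf s$ Poisson-commuting with $\mathbf x,\mathbf p$; $P_a=p_a$, $P_0=-\sqrt{m^2c^2+\mathbf p^2}$, $J_{ab}=x_ap_b-x_bp_a+{}^{(3)}\varepsilon_{abc}s^c$, $J_{a0}=P_0x_a-\frac{(\mathbf p\times\mathbf s)_a}{mc-P_0}$; time reversal $T_u(\mathbf x,\mathbf p,\hat{\mathbf s})=(\mathbf x,-\mathbf p,-\hat{\mathbf s})$. *)

theory Defs
  imports "HOL-Analysis.Analysis"
begin

text \<open>Spin-S phase space: points (x,p,s) :: (real^3) \<times> (real^3) \<times> (real^3) with norm s = 1
  (s plays the role of the unit vector s-hat on the sphere S^2).\<close>

definition eps3 :: "3 \<Rightarrow> 3 \<Rightarrow> 3 \<Rightarrow> real" where
  "eps3 a b c =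
     (if (a,b,c) \<in> {(1,2,3),(2,3,1),(3,1,2)} then 1
      else if (a,b,c) \<in> {(1,3,2),(3,2,1),(2,1,3)} then -1 else 0)"

definition pd :: "('a::real_normed_vector \<Rightarrow> real) \<Rightarrow> 'a \<Rightarrow> 'a \<Rightarrow> real" where
  "pd f z v = frechet_derivative f (at z) v"

text \<open>C^1 on an open set U: differentiable at every point of U with continuous derivative
  (continuity of all directional derivatives, equivalent in finite dimension).\<close>
definition C1_on :: "'a::real_normed_vector set \<Rightarrow> ('a \<Rightarrow> real) \<Rightarrow> bool" where
  "C1_on U f \<longleftrightarrow> (\<forall>z\<in>U. f differentiable (at z)) \<and>
     (\<forall>v. continuous_on U (\<lambda>z. frechet_derivative f (at z) v))"

text \<open>Poisson bracket on T*R^3 with omega = dx^a wedge dp_a, so {x^a,p_b} = delta.\<close>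
definition pb0 :: "((real^3) \<times> (real^3) \<Rightarrow> real) \<Rightarrow> ((real^3) \<times> (real^3) \<Rightarrow> real)
                   \<Rightarrow> (real^3) \<times> (real^3) \<Rightarrow> real" where
  "pb0 f g z = (\<Sum>a\<in>UNIV.
      pd f z (axis a 1, 0) * pd g z (0, axis a 1) - pd f z (0, axis a 1) * pd g z (axis a 1, 0))"

text \<open>Degree-0 homogeneous extension in the sphere variable: a function on
  Gamma = T*R^3 x S^2 is C^1 iff this extension is C^1 on the open set s \<noteq> 0.\<close>
definition hext :: "((real^3) \<times> (real^3) \<times> (real^3) \<Rightarrow> 'b) \<Rightarrow> (real^3) \<times> (real^3) \<times> (real^3) \<Rightarrow> 'b" where
  "hext f z = f (fst z, fst (snd z), sgn (snd (snd z)))"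

text \<open>Poisson bracket on T*R^3 x S^2 with omega = dx^a wedge dp_a + S dOmega, normalised by
  {s_a,s_b} = eps_abc s^c for s = S s-hat, i.e. {f,g}_sphere = (1/S) s-hat . (grad f x grad g).\<close>
definition pbS :: "real \<Rightarrow> ((real^3) \<times> (real^3) \<times> (real^3) \<Rightarrow> real) \<Rightarrow> ((real^3) \<times> (real^3) \<times> (real^3) \<Rightarrow> real)
                   \<Rightarrow> (real^3) \<times> (real^3) \<times> (real^3) \<Rightarrow> real" where
  "pbS S f g z =
     (\<Sum>a\<in>UNIV.
        pd (hext f) z (axis a 1, 0, 0) * pd (hext g) z (0, axis a 1, 0)
      - pd (hext f) z (0, axis a 1, 0) * pd (hext g) z (axis a 1, 0, 0))
   + (1 / S) * (\<Sum>a\<in>UNIV. \<Sum>b\<in>UNIV. \<Sum>c\<in>UNIV.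
        eps3 a b c * (snd (snd z)) $ c * pd (hext f) z (0, 0, axis a 1) * pd (hext g) z (0, 0, axis b 1))"

definition P0 :: "3 \<Rightarrow> (real^3) \<times> (real^3) \<Rightarrow> real" where
  "P0 a z = snd z $ a"
definition J0 :: "3 \<Rightarrow> 3 \<Rightarrow> (real^3) \<times> (real^3) \<Rightarrow> real" where
  "J0 a b z = fst z $ a * snd z $ b - fst z $ b * snd z $ a"

text \<open>Generators, case (ii), with s = S * s-hat.\<close>
definition PS :: "3 \<Rightarrow> (real^3) \<times> (real^3) \<times> (real^3) \<Rightarrow> real" where
  "PS a z = fst (snd z) $ a"
definition JS :: "real \<Rightarrow> 3 \<Rightarrow> 3 \<Rightarrow> (real^3) \<times> (real^3) \<times> (real^3) \<Rightarrow> real" where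
  "JS S a b z = fst z $ a * fst (snd z) $ b - fst z $ b * fst (snd z) $ a
     + (\<Sum>c\<in>UNIV. eps3 a b c * (S * snd (snd z) $ c))"

end

theory Submission
  imports Defs
begin

text \<open>
  Rotation covariance of \<open>A\<close> says that, along a rigid rotation of \<open>(p, s)\<close> with
  angular velocity \<open>n\<close>, the vector \<open>A\<close> itself rotates with angular velocity \<open>n\<close>; hence
  \<open>A \<bullet> p\<close> is constant along the rotation. Choosing \<open>n\<close> orthogonal to both \<open>p\<close> and \<open>s\<close>,
  the rotation by \<open>\<pi>\<close> sends \<open>(p, s)\<close> to \<open>(-p, -s)\<close>, which time reversal identifies
  with \<open>(p, s)\<close> while it flips the sign of \<open>A \<bullet> p\<close>. Translation invariance only serves
  to remove the position derivatives from the brackets with \<open>J\<close>.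
\<close>

lemma axis_one_nth: "axis i (1::real) $ j = (if j = i then 1 else 0)"
  by (simp add: axis_def)

lemma eps3_simps [simp]:
  "eps3 1 2 3 = 1" "eps3 2 3 1 = 1" "eps3 3 1 2 = 1"
  "eps3 1 3 2 = -1" "eps3 3 2 1 = -1" "eps3 2 1 3 = -1"
  "eps3 a a c = 0" "eps3 a c a = 0" "eps3 c a a = 0"
  by (auto simp: eps3_def)

lemma pd_eq_derivative: "(f has_derivative f') (at z) \<Longrightarrow> pd f z v = f' v"
  unfolding pd_def by (simp add: frechet_derivative_at[symmetric])

lemmas has_derivative_vec_nth [derivative_intros] =
  bounded_linear.has_derivative [OF bounded_linear_vec_nth]

text \<open>\<open>P c a\<close> and \<open>Q c a\<close> stand for the derivatives of \<open>F$c\<close> along \<open>p$a\<close> and \<open>s$a\<close>.\<close>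

lemma infinitesimal_rotation_cross:
  fixes p s n F :: "real^3" and P Q :: "3 \<Rightarrow> 3 \<Rightarrow> real"
  assumes rot: "\<And>a b c. p$b * P c a - p$a * P c b + s$b * Q c a - s$a * Q c b
       = (if a = c then F$b else 0) - (if b = c then F$a else 0)"
  shows "(\<Sum>a\<in>UNIV. (cross3 n p)$a * P c a) + (\<Sum>a\<in>UNIV. (cross3 n s)$a * Q c a) = (cross3 n F)$c"
proof -
  have "(\<Sum>a\<in>UNIV. (cross3 n p)$a * P c a) + (\<Sum>a\<in>UNIV. (cross3 n s)$a * Q c a)
      = n$1 * (p$2 * P c 3 - p$3 * P c 2 + s$2 * Q c 3 - s$3 * Q c 2)
      + n$2 * (p$3 * P c 1 - p$1 * P c 3 + s$3 * Q c 1 - s$1 * Q c 3)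
      + n$3 * (p$1 * P c 2 - p$2 * P c 1 + s$1 * Q c 2 - s$2 * Q c 1)"
    by (simp add: sum_3 cross_components algebra_simps)
  also have "\<dots> = (cross3 n F)$c"
    unfolding rot using exhaust_3[of c] by (auto simp: cross_components)
  finally show ?thesis .
qed

text \<open>A rotation by angle \<open>t\<close> about \<open>n\<close> only when \<open>n\<close> is a unit vector orthogonal to \<open>v\<close>.\<close>

definition rotate_perp :: "real^3 \<Rightarrow> real^3 \<Rightarrow> real \<Rightarrow> real^3" where
  "rotate_perp n v t = cos t *\<^sub>R v + sin t *\<^sub>R cross3 n v"

lemma rotate_perp_0 [simp]: "rotate_perp n v 0 = v"
  and rotate_perp_pi [simp]: "rotate_perp n v pi = - v"
  by (simp_all add: rotate_perp_def)

context
  fixes n v :: "real^3"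
  assumes unit: "norm n = 1" and perp: "n \<bullet> v = 0"
begin

lemma cross_rotate_perp: "cross3 n (rotate_perp n v t) = - sin t *\<^sub>R v + cos t *\<^sub>R cross3 n v"
proof -
  have "n \<bullet> n = 1" using unit by (simp add: norm_eq_1)
  then show ?thesis
    by (simp add: rotate_perp_def cross_add_right cross_mult_right Lagrange perp)
qed

lemma rotate_perp_has_derivative:
  "(rotate_perp n v has_derivative (\<lambda>d. d *\<^sub>R cross3 n (rotate_perp n v t))) (at t)"
  unfolding cross_rotate_perp unfolding rotate_perp_def [abs_def]
  by (auto intro!: derivative_eq_intros simp: algebra_simps)

lemma norm_rotate_perp: "norm (rotate_perp n v t) = norm v"
proof -
  have "norm (cross3 n v) = norm v"
    using norm_cross_dot[of n v] unit perp by (simp add: power2_eq_iff_nonneg)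
  moreover have "orthogonal (cos t *\<^sub>R v) (sin t *\<^sub>R cross3 n v)"
    by (simp add: orthogonal_def dot_cross_self)
  ultimately have "(norm (rotate_perp n v t))\<^sup>2 = (norm v)\<^sup>2"
    unfolding rotate_perp_def by (subst norm_add_Pythagorean)
      (simp_all add: power_mult_distrib flip: distrib_right)
  then show ?thesis by (rule power2_eq_imp_eq) simp_all
qed

end

lemma exists_unit_orthogonal2:
  fixes p s :: "real^3"
  obtains n where "norm n = 1" "n \<bullet> p = 0" "n \<bullet> s = 0"
proof -
  have "dim {p, s} \<le> card {p, s}" by (rule dim_le_card') simp
  also have "\<dots> \<le> 2" by (simp add: card_insert_le_m1)
  also have "\<dots> < DIM(real^3)" by simp
  finally obtain n where "n \<noteq> 0" and "\<And>y. y \<in> span {p, s} \<Longrightarrow> orthogonal n y"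
    using orthogonal_to_subspace_exists by metis
  then have "orthogonal n p" "orthogonal n s" by (simp_all add: span_base)
  with \<open>n \<noteq> 0\<close> show ?thesis
    by (intro that[of "n /\<^sub>R norm n"]) (auto simp: orthogonal_def)
qed

lemma linear_expansion_snd:
  fixes L :: "(real^3) \<times> (real^3) \<times> (real^3) \<Rightarrow> real"
  assumes "linear L"
  shows "L (0, u, w) = (\<Sum>a\<in>UNIV. u$a * L (0, axis a 1, 0)) + (\<Sum>a\<in>UNIV. w$a * L (0, 0, axis a 1))"
proof -
  have coords: "(0, u, w) = (\<Sum>a\<in>UNIV. u$a *\<^sub>R (0, axis a 1, 0)) + (\<Sum>a\<in>UNIV. w$a *\<^sub>R (0, 0, axis a 1))"
    by (simp add: sum_3 vec_eq_iff forall_3 axis_def prod_eq_iff)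
  show ?thesis
    by (subst coords, simp only: linear_add[OF assms] linear_sum[OF assms] linear_scale[OF assms]) simp
qed

text \<open>The relation \<open>{J_ab, F_c} = \<delta>_ac F_b - \<delta>_bc F_a\<close> for a translation invariant field,
  where only the momentum and spin parts of \<open>J_ab\<close> contribute.\<close>

definition rotation_covariant :: "(3 \<Rightarrow> (real^3) \<times> (real^3) \<times> (real^3) \<Rightarrow> real) \<Rightarrow> bool" where
  "rotation_covariant F \<longleftrightarrow> (\<forall>a b c x p s. norm s = 1 \<longrightarrow>
      p$b * pd (F c) (x, p, s) (0, axis a 1, 0) - p$a * pd (F c) (x, p, s) (0, axis b 1, 0)
      + s$b * pd (F c) (x, p, s) (0, 0, axis a 1) - s$a * pd (F c) (x, p, s) (0, 0, axis b 1)
      = (if a = c then F b (x, p, s) else 0) - (if b = c then F a (x, p, s) else 0))"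

context
  fixes F :: "3 \<Rightarrow> (real^3) \<times> (real^3) \<times> (real^3) \<Rightarrow> real"
  assumes diff: "\<And>c x p s. norm s = 1 \<Longrightarrow> F c differentiable (at (x, p, s))"
    and covariant: "rotation_covariant F"
begin

lemma covariant_has_derivative_rotate_perp:
  assumes n: "norm n = 1" "n \<bullet> p = 0" "n \<bullet> s = 0" and s: "norm s = 1"
  shows "((\<lambda>t. F c (x, rotate_perp n p t, rotate_perp n s t)) has_derivative
           (\<lambda>d. d * cross3 n (\<chi> b. F b (x, rotate_perp n p t, rotate_perp n s t)) $ c)) (at t)"
proof -
  define z where "z t = (x, rotate_perp n p t, rotate_perp n s t)" for t
  let ?D = "frechet_derivative (F c) (at (z t))"
  have unit: "norm (rotate_perp n s t) = 1"
    using norm_rotate_perp[OF n(1,3)] s by simp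
  then have dF: "(F c has_derivative ?D) (at (z t))"
    using diff by (simp add: z_def frechet_derivative_works)
  have "(z has_derivative (\<lambda>d. d *\<^sub>R (0, cross3 n (rotate_perp n p t), cross3 n (rotate_perp n s t)))) (at t)"
    unfolding z_def [abs_def]
    by (auto intro!: derivative_eq_intros rotate_perp_has_derivative n)
  from has_derivative_compose[OF this dF]
  have "((\<lambda>t. F c (z t)) has_derivative
          (\<lambda>d. d * ?D (0, cross3 n (rotate_perp n p t), cross3 n (rotate_perp n s t)))) (at t)"
    by (simp add: o_def linear_scale[OF has_derivative_linear[OF dF]] del: scaleR_Pair)
  moreover have "?D (0, cross3 n (rotate_perp n p t), cross3 n (rotate_perp n s t))
      = (\<Sum>a\<in>UNIV. cross3 n (rotate_perp n p t) $ a * pd (F c) (z t) (0, axis a 1, 0))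
      + (\<Sum>a\<in>UNIV. cross3 n (rotate_perp n s t) $ a * pd (F c) (z t) (0, 0, axis a 1))"
    unfolding pd_def by (rule linear_expansion_snd[OF has_derivative_linear[OF dF]])
  also have "\<dots> = cross3 n (\<chi> b. F b (z t)) $ c"
    by (rule infinitesimal_rotation_cross) (use covariant unit in \<open>simp add: z_def rotation_covariant_def\<close>)
  ultimately show ?thesis by (simp add: z_def)
qed

lemma time_even_covariant_orthogonal:
  assumes even: "\<And>c x p s. norm s = 1 \<Longrightarrow> F c (x, -p, -s) = F c (x, p, s)"
    and s: "norm s = 1"
  shows "(\<Sum>c\<in>UNIV. F c (x, p, s) * p$c) = 0"
proof -
  obtain n :: "real^3" where n: "norm n = 1" "n \<bullet> p = 0" "n \<bullet> s = 0"
    by (rule exists_unit_orthogonal2)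
  define z where "z t = (x, rotate_perp n p t, rotate_perp n s t)" for t
  define h where "h t = (\<Sum>c\<in>UNIV. F c (z t) * rotate_perp n p t $ c)" for t
  have "DERIV h t :> 0" for t
  proof -
    let ?G = "\<chi> b. F b (z t)" and ?q = "rotate_perp n p t"
    have "(h has_derivative (\<lambda>d. \<Sum>c\<in>UNIV. d * cross3 n ?G $ c * ?q $ c + F c (z t) * (d * cross3 n ?q $ c))) (at t)"
      unfolding h_def [abs_def] z_def
      by (auto intro!: derivative_eq_intros rotate_perp_has_derivative[OF n(1,2)]
          covariant_has_derivative_rotate_perp[OF n s, unfolded z_def] simp: algebra_simps)
    moreover have "(\<Sum>c\<in>UNIV. d * cross3 n ?G $ c * ?q $ c + F c (z t) * (d * cross3 n ?q $ c))
        = d * (cross3 n ?G \<bullet> ?q + ?G \<bullet> cross3 n ?q)" for d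
      by (simp add: inner_vec_def sum_distrib_left sum.distrib algebra_simps)
    moreover have "cross3 n ?G \<bullet> ?q + ?G \<bullet> cross3 n ?q = 0"
      by (simp add: cross3_simps)
    ultimately show ?thesis by (simp add: has_field_derivative_def mult_zero_left [abs_def])
  qed
  then have "h pi = h 0" using DERIV_isconst_all by blast
  then have "- (\<Sum>c\<in>UNIV. F c (x, p, s) * p $ c) = (\<Sum>c\<in>UNIV. F c (x, p, s) * p $ c)"
    by (simp add: h_def z_def even[OF s] sum_negf)
  then show ?thesis by linarith
qed

end

lemma pd_P0: "pd (P0 a) z v = snd v $ a"
  by (rule pd_eq_derivative) (auto simp: P0_def [abs_def] intro!: derivative_eq_intros)

lemma pd_J0: "pd (J0 a b) (x, p) (u, v) = u$a * p$b + x$a * v$b - u$b * p$a - x$b * v$a"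
proof -
  have "(J0 a b has_derivative (\<lambda>(u, v). u$a * p$b + x$a * v$b - u$b * p$a - x$b * v$a)) (at (x, p))"
    by (auto simp: J0_def [abs_def] fun_eq_iff algebra_simps intro!: derivative_eq_intros)
  then show ?thesis by (simp add: pd_eq_derivative)
qed

lemma pb0_P0: "pb0 (P0 a) g z = - pd g z (axis a 1, 0)"
  using exhaust_3[of a] by (auto simp: pb0_def pd_P0 axis_one_nth sum_3)

lemma pb0_J0:
  "pb0 (J0 a b) g (x, p) = p$b * pd g (x, p) (0, axis a 1) - p$a * pd g (x, p) (0, axis b 1)
     - x$a * pd g (x, p) (axis b 1, 0) + x$b * pd g (x, p) (axis a 1, 0)"
  using exhaust_3[of a] exhaust_3[of b]
  by (auto simp: pb0_def pd_J0 axis_one_nth sum_3 algebra_simps)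

lemma has_derivative_sgn_unit:
  fixes s :: "'a::real_inner"
  assumes "norm s = 1"
  shows "(sgn has_derivative (\<lambda>w. w - (s \<bullet> w) *\<^sub>R s)) (at s)"
proof -
  have "s \<noteq> 0" using assms by auto
  then have "((\<lambda>s. inverse (norm s) *\<^sub>R s) has_derivative
     (\<lambda>w. inverse (norm s) *\<^sub>R w + (- (inverse (norm s) * ((w \<bullet> sgn s) * inverse (norm s)))) *\<^sub>R s)) (at s)"
    by (auto intro!: derivative_eq_intros has_derivative_norm)
  moreover have "sgn = (\<lambda>s::'a. inverse (norm s) *\<^sub>R s)"
    by (auto simp: sgn_div_norm fun_eq_iff divide_inverse_commute)
  ultimately show ?thesis using assms by (simp add: sgn_div_norm inner_commute)
qed

lemma pd_PS: "pd (hext (PS a)) z v = fst (snd v) $ a"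
  by (rule pd_eq_derivative) (auto simp: hext_def PS_def [abs_def] intro!: derivative_eq_intros)

lemma pd_JS:
  assumes "norm s = 1"
  shows "pd (hext (JS S a b)) (x, p, s) (u, v, w) = u$a * p$b + x$a * v$b - u$b * p$a - x$b * v$a
     + (\<Sum>c\<in>UNIV. eps3 a b c * (S * (w$c - (s \<bullet> w) * s$c)))"
proof -
  have "((\<lambda>z. snd (snd z)) has_derivative (\<lambda>v. snd (snd v))) (at (x, p, s))"
    by (auto intro!: derivative_eq_intros)
  then have d_spin: "((\<lambda>z. sgn (snd (snd z))) has_derivative
      (\<lambda>v. snd (snd v) - (s \<bullet> snd (snd v)) *\<^sub>R s)) (at (x, p, s))"
    using has_derivative_compose[where g = sgn] has_derivative_sgn_unit[OF assms] by fastforce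
  have JS_ext: "hext (JS S a b) = (\<lambda>z. fst z $ a * fst (snd z) $ b - fst z $ b * fst (snd z) $ a
     + (\<Sum>c\<in>UNIV. eps3 a b c * (S * sgn (snd (snd z)) $ c)))"
    by (simp add: hext_def JS_def fun_eq_iff)
  have "(hext (JS S a b) has_derivative (\<lambda>(u, v, w). u$a * p$b + x$a * v$b - u$b * p$a - x$b * v$a
     + (\<Sum>c\<in>UNIV. eps3 a b c * (S * (w$c - (s \<bullet> w) * s$c))))) (at (x, p, s))"
    unfolding JS_ext by (auto simp: fun_eq_iff algebra_simps intro!: derivative_eq_intros d_spin)
  then show ?thesis by (simp add: pd_eq_derivative)
qed

lemma pbS_PS: "pbS S (PS a) g z = - pd (hext g) z (axis a 1, 0, 0)"
  using exhaust_3[of a] by (auto simp: pbS_def pd_PS axis_one_nth sum_3)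

lemma spin_bracket_JS:
  fixes s :: "real^3" and Q :: "3 \<Rightarrow> real"
  shows "(\<Sum>a'\<in>UNIV. \<Sum>b'\<in>UNIV. \<Sum>c'\<in>UNIV. eps3 a' b' c' * s$c' *
      (\<Sum>k\<in>UNIV. eps3 a b k * (S * ((if k = a' then 1 else 0) - s$a' * s$k))) * Q b')
     = S * (s$b * Q a - s$a * Q b)"
  using exhaust_3[of a] exhaust_3[of b]
  by (elim disjE) (simp_all add: sum_3 algebra_simps)

lemma pbS_JS:
  fixes x p s :: "real^3" and g :: "(real^3) \<times> (real^3) \<times> (real^3) \<Rightarrow> real"
  assumes "norm s = 1" and "S \<noteq> 0"
  defines "G \<equiv> pd (hext g) (x, p, s)"
  shows "pbS S (JS S a b) g (x, p, s)
     = p$b * G (0, axis a 1, 0) - p$a * G (0, axis b 1, 0)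
     - x$a * G (axis b 1, 0, 0) + x$b * G (axis a 1, 0, 0)
     + s$b * G (0, 0, axis a 1) - s$a * G (0, 0, axis b 1)"
proof -
  let ?J = "pd (hext (JS S a b)) (x, p, s)"
  have orbital: "(\<Sum>d\<in>UNIV. ?J (axis d 1, 0, 0) * G (0, axis d 1, 0) - ?J (0, axis d 1, 0) * G (axis d 1, 0, 0))
     = p$b * G (0, axis a 1, 0) - p$a * G (0, axis b 1, 0)
     - x$a * G (axis b 1, 0, 0) + x$b * G (axis a 1, 0, 0)"
    using exhaust_3[of a] exhaust_3[of b]
    by (auto simp: pd_JS[OF assms(1)] axis_one_nth sum_3 algebra_simps)
  have spin: "(\<Sum>a'\<in>UNIV. \<Sum>b'\<in>UNIV. \<Sum>c'\<in>UNIV. eps3 a' b' c' * s$c' * ?J (0, 0, axis a' 1) * G (0, 0, axis b' 1))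
     = S * (s$b * G (0, 0, axis a 1) - s$a * G (0, 0, axis b 1))"
    using spin_bracket_JS[of s a b S "\<lambda>b'. G (0, 0, axis b' 1)"]
    by (simp add: pd_JS[OF assms(1)] axis_one_nth inner_axis)
  have "pbS S (JS S a b) g (x, p, s)
    = (\<Sum>d\<in>UNIV. ?J (axis d 1, 0, 0) * G (0, axis d 1, 0) - ?J (0, axis d 1, 0) * G (axis d 1, 0, 0))
    + (1 / S) * (\<Sum>a'\<in>UNIV. \<Sum>b'\<in>UNIV. \<Sum>c'\<in>UNIV. eps3 a' b' c' * s$c' * ?J (0, 0, axis a' 1) * G (0, 0, axis b' 1))"
    unfolding pbS_def G_def by simp
  then show ?thesis
    using assms(2) unfolding orbital spin by simp
qed

lemma spinless_invariant_field_orthogonal: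
  fixes A :: "(real^3) \<times> (real^3) \<Rightarrow> real^3"
  assumes C1: "\<forall>b. C1_on UNIV (\<lambda>z. A z $ b)"
    and translation: "\<forall>a b z. pb0 (P0 a) (\<lambda>w. A w $ b) z = 0"
    and rotation: "\<forall>a b c z. pb0 (J0 a b) (\<lambda>w. A w $ c) z
                 = (if a = c then A z $ b else 0) - (if b = c then A z $ a else 0)"
    and even: "\<forall>x p. A (x, - p) = A (x, p)"
  shows "A (x, p) \<bullet> p = 0"
proof -
  define G where "G c w = A w $ c" for c w
  define F where "F c z = G c (fst z, fst (snd z))" for c and z :: "(real^3) \<times> (real^3) \<times> (real^3)"
  have dG: "(G c has_derivative frechet_derivative (G c) (at (x, p))) (at (x, p))" for c x p
    using C1 unfolding C1_on_def G_def [abs_def] frechet_derivative_works by auto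
  have proj: "((\<lambda>z. (fst z, fst (snd z))) has_derivative (\<lambda>z. (fst z, fst (snd z)))) (at z)"
    for z :: "(real^3) \<times> (real^3) \<times> (real^3)"
    by (auto intro!: derivative_eq_intros)
  have dF: "(F c has_derivative (\<lambda>v. frechet_derivative (G c) (at (x, p)) (fst v, fst (snd v)))) (at (x, p, s))"
    for c x p s
    unfolding F_def [abs_def] using has_derivative_compose[OF proj, where g = "G c"] dG by simp
  then have pd_F: "pd (F c) (x, p, s) (u, v, w) = pd (G c) (x, p) (u, v)" for c x p s u v w
    unfolding pd_eq_derivative[OF dF] by (simp add: pd_def)
  have pd_G_x: "pd (G c) z (axis a 1, 0) = 0" for a c z
    using translation[rule_format, of a c z] by (simp add: pb0_P0 G_def [abs_def])
  have pd_G_0: "pd (G c) z (0, 0) = 0" for c z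
    using linear_0[OF has_derivative_linear[OF dG]] by (cases z) (simp add: pd_def zero_prod_def)
  txt \<open>The spinless field is lifted to the spin phase space with an inert spin variable.\<close>
  have "(\<Sum>c\<in>UNIV. F c (x, p, axis 1 1) * p$c) = 0"
  proof (rule time_even_covariant_orthogonal)
    show "F c differentiable (at (x, p, s))" for c x p s
      unfolding differentiable_def using dF by blast
    have "pb0 (J0 a b) (G c) (x, p) = (if a = c then G b (x, p) else 0) - (if b = c then G a (x, p) else 0)"
      for a b c x p
      using rotation by (simp add: G_def [abs_def])
    then show "rotation_covariant F"
      by (simp add: rotation_covariant_def pb0_J0 pd_F pd_G_x pd_G_0 F_def)
  qed (simp_all add: F_def G_def even)
  then show ?thesis by (simp add: F_def G_def inner_vec_def mult.commute)
qed

lemma spinning_invariant_field_orthogonal: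
  fixes A :: "(real^3) \<times> (real^3) \<times> (real^3) \<Rightarrow> real^3"
  assumes S: "S > 0"
    and C1: "\<forall>b. C1_on {z. snd (snd z) \<noteq> 0} (hext (\<lambda>z. A z $ b))"
    and translation: "\<forall>a b x p s. norm s = 1 \<longrightarrow> pbS S (PS a) (\<lambda>w. A w $ b) (x, p, s) = 0"
    and rotation: "\<forall>a b c x p s. norm s = 1 \<longrightarrow> pbS S (JS S a b) (\<lambda>w. A w $ c) (x, p, s)
                 = (if a = c then A (x, p, s) $ b else 0) - (if b = c then A (x, p, s) $ a else 0)"
    and even: "\<forall>x p s. norm s = 1 \<longrightarrow> A (x, - p, - s) = A (x, p, s)"
    and s: "norm s = 1"
  shows "A (x, p, s) \<bullet> p = 0"
proof -
  define F where "F c = hext (\<lambda>z. A z $ c)" for c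
  have F_unit: "F c (x, p, s) = A (x, p, s) $ c" if "norm s = 1" for c x p s
    using that by (simp add: F_def hext_def sgn_div_norm)
  have pd_F_x: "pd (F c) (x, p, s) (axis a 1, 0, 0) = 0" if "norm s = 1" for a c x p s
    using translation that by (simp add: pbS_PS F_def)
  have "(\<Sum>c\<in>UNIV. F c (x, p, s) * p$c) = 0"
  proof (rule time_even_covariant_orthogonal)
    show "F c differentiable (at (x, p, s))" if "norm s = 1" for c x p s
    proof -
      have "s \<noteq> 0" using that by auto
      then show ?thesis using C1 by (simp add: C1_on_def F_def)
    qed
    show "rotation_covariant F"
      using rotation S by (simp add: rotation_covariant_def pbS_JS pd_F_x F_unit F_def [symmetric])
    show "F c (x, - p, - s) = F c (x, p, s)" if "norm s = 1" for c x p s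
      using even that by (simp add: F_unit)
  qed (fact s)
  then show ?thesis using s by (simp add: F_unit inner_vec_def mult.commute)
qed

theorem mainTheorem10:
  shows
  "(\<forall>A :: (real^3) \<times> (real^3) \<Rightarrow> real^3.
      (\<forall>b. C1_on UNIV (\<lambda>z. A z $ b))
    \<and> (\<forall>a b z. pb0 (P0 a) (\<lambda>w. A w $ b) z = 0)
    \<and> (\<forall>a b c z. pb0 (J0 a b) (\<lambda>w. A w $ c) z
                 = (if a = c then A z $ b else 0) - (if b = c then A z $ a else 0))
    \<and> (\<forall>x p. A (x, - p) = A (x, p))
    \<longrightarrow> (\<forall>x p. A (x, p) \<bullet> p = 0))
 \<and> (\<forall>S :: real. S > 0 \<longrightarrow>
     (\<forall>A :: (real^3) \<times> (real^3) \<times> (real^3) \<Rightarrow> real^3.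
      (\<forall>b. C1_on {z. snd (snd z) \<noteq> 0} (hext (\<lambda>z. A z $ b)))
    \<and> (\<forall>a b x p s. norm s = 1 \<longrightarrow> pbS S (PS a) (\<lambda>w. A w $ b) (x, p, s) = 0)
    \<and> (\<forall>a b c x p s. norm s = 1 \<longrightarrow> pbS S (JS S a b) (\<lambda>w. A w $ c) (x, p, s)
                 = (if a = c then A (x, p, s) $ b else 0) - (if b = c then A (x, p, s) $ a else 0))
    \<and> (\<forall>x p s. norm s = 1 \<longrightarrow> A (x, - p, - s) = A (x, p, s))
    \<longrightarrow> (\<forall>x p s. norm s = 1 \<longrightarrow> A (x, p, s) \<bullet> p = 0)))"
  by (intro conjI allI impI; elim conjE)
    (blast intro: spinless_invariant_field_orthogonal spinning_invariant_field_orthogonal)+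

end
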